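(* Let $(\mathfrak{X},\pi)$, $a$, $s$, $S$, $m$ and $\kappa$ be as in the context and assume (A), (B) and (C). Then \[ |m_x(z)|\sim 1\qquad\text{for all }x\in\mathfrak{X},\ z\in\mathbb{H},\ |z|\le 2\kappa, \] and \[ \operatorname{Im}m_x(z)\sim\operatorname{Im}m_y(z)\qquad\text{for all }x,y\in\mathfrak{X},\ z\in\mathbb{H},\ |z|\le2\kappa . \]
   Context: Let $(\mathfrak{X},\pi)$ be a measure space where $\pi$ is a probability measure; $\mathcal{B}(\mathfrak{X},\mathbb{D})$ denotes bounded measurable $\mathbb{D}$-valued functions with sup norm $\|\cdot\|$, and $\|T\|$ the induced operator norm; $\langle w\rangle=\int w_x\,\pi(\mathrm{d}x)$. Let $a\in\mathcal{B}(\mathfrak{X},\mathbb{R})$, $s\in\mathcal{B}(\mathfrak{X}^2,[0,\infty))$ symmetric, $(Sw)_x=\int s_{xy}w_y\,\pi(\mathrm{d}y)$, $S_x:=(y\mapsto s_{xy})$, and $\kappa:=\|a\|+2\|S\|^{1/2}$. $m:\mathbb{H}\to\mathcal{B}(\mathfrak{X},\mathbb{H})$ is the unique solution of $-1/m(z)=z+a+Sm(z)$, $z\in\mathbb{H}$ (upper half-plane). Comparison notation: for non-negative functions $\varphi,\psi$, $\varphi\lesssim\psi$ means $\varphi\le C\psi$ for a constant $0<C<\infty$ depending only on $s$ and $a$; $\varphi\sim\psi$ means $\varphi\lesssim\psi\lesssim\varphi$. Assumptions: (A) there is a symmetric $r\in\mathcal{B}(\mathfrak{X}^2,[0,\infty))$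 with $s_{xy}\ge\int r_{xu}r_{uy}\,\pi(\mathrm{d}u)$ and $\inf_x\int r_{xy}\,\pi(\mathrm{d}y)>0$. (B) There is $K\in\mathbb{N}$ with $\inf_{x,y}s^{(K)}_{xy}>0$, $s^{(K)}$ the kernel of $S^K$. (C) $\lim_{\varepsilon\downarrow0}\inf_{x}\int\frac{\pi(\mathrm{d}y)}{\varepsilon+(a_x-a_y)^2+\langle (S_x-S_y)^2\rangle}=\infty$. *)

theory Defs
  imports "HOL-Probability.Probability"
begin

definition supnorm :: "'a measure \<Rightarrow> ('a \<Rightarrow> 'b::real_normed_vector) \<Rightarrow> real" where
  "supnorm M f = (SUP x\<in>space M. norm (f x))"

definition bmeas :: "'a measure \<Rightarrow> ('a \<Rightarrow> 'b::{real_normed_vector, second_countable_topology}) set" where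
  "bmeas M = {f. f \<in> borel_measurable M \<and> bounded (f ` space M)}"

definition Sop :: "'a measure \<Rightarrow> ('a \<Rightarrow> 'a \<Rightarrow> real) \<Rightarrow> ('a \<Rightarrow> complex) \<Rightarrow> 'a \<Rightarrow> complex" where
  "Sop M s w x = (LINT y|M. complex_of_real (s x y) * w y)"

definition Sopnorm :: "'a measure \<Rightarrow> ('a \<Rightarrow> 'a \<Rightarrow> real) \<Rightarrow> real" where
  "Sopnorm M s = Sup {supnorm M (Sop M s w) | w. w \<in> bmeas M \<and> supnorm M w \<le> 1}"

definition kappa :: "'a measure \<Rightarrow> ('a \<Rightarrow> real) \<Rightarrow> ('a \<Rightarrow> 'a \<Rightarrow> real) \<Rightarrow> real" where
  "kappa M a s = supnorm M a + 2 * sqrt (Sopnorm M s)"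

text \<open>Iterated kernels: kern_iter M s n is the kernel of S^(n+1).\<close>
primrec kern_iter :: "'a measure \<Rightarrow> ('a \<Rightarrow> 'a \<Rightarrow> real) \<Rightarrow> nat \<Rightarrow> 'a \<Rightarrow> 'a \<Rightarrow> real" where
  "kern_iter M s 0 = s"
| "kern_iter M s (Suc n) = (\<lambda>x y. LINT u|M. kern_iter M s n x u * s u y)"

text \<open>Kernel s^(K) of S^K, for K >= 1.\<close>
definition kern_pow :: "'a measure \<Rightarrow> ('a \<Rightarrow> 'a \<Rightarrow> real) \<Rightarrow> nat \<Rightarrow> 'a \<Rightarrow> 'a \<Rightarrow> real" where
  "kern_pow M s K = kern_iter M s (K - 1)"

end

theory Submission
  imports Defs
begin

text \<open>
  Write \<open>v = Im m\<close>. Taking imaginary parts in the equation gives \<open>v / |m|\<^sup>2 = Im z + S v\<close>.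
  By (A), \<open>S v \<ge> R w\<close> with \<open>w = R v\<close>, and Cauchy-Schwarz gives
  \<open>(R 1)\<^sup>2 \<le> R w \<cdot> R (1/w)\<close>, so \<open>|m|\<^sup>2 \<le> v \<cdot> R (1/w) / \<rho>\<^sup>2\<close>; since \<open>r\<close> is symmetric,
  \<open>\<langle>v \<cdot> R (1/w)\<rangle> = \<langle>R v / w\<rangle> = 1\<close>, hence \<open>\<langle>|m|\<^sup>2\<rangle> \<le> 1/\<rho>\<^sup>2\<close>.
  Subtracting the equations at \<open>x\<close> and \<open>y\<close> bounds \<open>|m y|\<^sup>-\<^sup>2\<close> by
  \<open>|m x|\<^sup>-\<^sup>2 + (a x - a y)\<^sup>2 + \<langle>(S\<^sub>x - S\<^sub>y)\<^sup>2\<rangle>\<close>; if \<open>|m x|\<close> were large, (C) would make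
  \<open>\<langle>|m|\<^sup>2\<rangle>\<close> large, so \<open>|m|\<close> is bounded above, and then the equation bounds it below.
  Finally, iterating \<open>v \<ge> |m|\<^sup>2 S v\<close> and using (B) gives \<open>v y \<gtrsim> \<langle>v\<rangle>\<close>, while
  \<open>v x \<lesssim> Im z + \<langle>v\<rangle> \<lesssim> v y\<close>.
\<close>

lemma quadratic_nonneg_imp_discriminant_le:
  fixes F B H :: real
  assumes F: "0 \<le> F" and q: "\<And>t. 0 \<le> t\<^sup>2 * F - 2 * t * B + H"
  shows "B\<^sup>2 \<le> F * H"
proof (cases "F = 0")
  case True
  show ?thesis
  proof (cases "B = 0")
    case False
    have "0 \<le> ((H + 1) / (2 * B))\<^sup>2 * F - 2 * ((H + 1) / (2 * B)) * B + H" by (rule q)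
    with True False show ?thesis by simp
  qed (use True q[of 0] in simp)
next
  case False
  hence F: "0 < F" using F by simp
  have "0 \<le> (B / F)\<^sup>2 * F - 2 * (B / F) * B + H" by (rule q)
  hence "0 \<le> H - B\<^sup>2 / F" using F by (simp add: power2_eq_square field_simps)
  thus ?thesis using F by (simp add: field_simps)
qed

lemma Cauchy_Schwarz_integral:
  fixes f g :: "'a \<Rightarrow> real"
  assumes [measurable]: "f \<in> borel_measurable M" "g \<in> borel_measurable M"
    and f2: "integrable M (\<lambda>x. (f x)\<^sup>2)" and g2: "integrable M (\<lambda>x. (g x)\<^sup>2)"
  shows "(\<integral>x. f x * g x \<partial>M)\<^sup>2 \<le> (\<integral>x. (f x)\<^sup>2 \<partial>M) * (\<integral>x. (g x)\<^sup>2 \<partial>M)"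
proof (rule quadratic_nonneg_imp_discriminant_le)
  have fg: "integrable M (\<lambda>x. f x * g x)"
  proof (rule Bochner_Integration.integrable_bound[OF Bochner_Integration.integrable_add[OF f2 g2]])
    have "\<bar>p * q\<bar> \<le> p\<^sup>2 + q\<^sup>2" for p q :: real
    proof -
      have "2 * \<bar>p * q\<bar> \<le> p\<^sup>2 + q\<^sup>2"
        using sum_squares_bound[of "\<bar>p\<bar>" "\<bar>q\<bar>"] by (simp add: abs_mult mult.assoc)
      thus ?thesis using abs_ge_zero[of "p * q"] by linarith
    qed
    thus "AE x in M. norm (f x * g x) \<le> norm ((f x)\<^sup>2 + (g x)\<^sup>2)" by auto
  qed measurable
  show "0 \<le> (\<integral>x. (f x)\<^sup>2 \<partial>M)" by (rule integral_nonneg_AE) auto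
  fix t :: real
  have "0 \<le> (\<integral>x. (t * f x - g x)\<^sup>2 \<partial>M)" by (rule integral_nonneg_AE) auto
  also have "\<dots> = (\<integral>x. t\<^sup>2 * (f x)\<^sup>2 - 2 * t * (f x * g x) + (g x)\<^sup>2 \<partial>M)"
    by (intro Bochner_Integration.integral_cong) (auto simp: power2_eq_square algebra_simps)
  also have "\<dots> = t\<^sup>2 * (\<integral>x. (f x)\<^sup>2 \<partial>M) - 2 * t * (\<integral>x. f x * g x \<partial>M) + (\<integral>x. (g x)\<^sup>2 \<partial>M)"
    using f2 g2 fg by simp
  finally show "0 \<le> t\<^sup>2 * (\<integral>x. (f x)\<^sup>2 \<partial>M) - 2 * t * (\<integral>x. f x * g x \<partial>M) + (\<integral>x. (g x)\<^sup>2 \<partial>M)" .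
qed

lemma measurable_pair_compose:
  assumes "(\<lambda>(x, y). f x y) \<in> borel_measurable (M \<Otimes>\<^sub>M M)" "g \<in> N \<rightarrow>\<^sub>M M" "h \<in> N \<rightarrow>\<^sub>M M"
  shows "(\<lambda>t. f (g t) (h t)) \<in> borel_measurable N"
  using measurable_compose[OF measurable_Pair[OF assms(2,3)] assms(1)] by simp

lemma (in prob_space) integrable_bounded:
  fixes f :: "'a \<Rightarrow> 'b::{banach,second_countable_topology}"
  assumes "f \<in> borel_measurable M" "\<And>x. x \<in> space M \<Longrightarrow> norm (f x) \<le> B"
  shows "integrable M f"
  using assms by (intro integrable_const_bound[where B=B]) (auto intro: AE_I2)

lemma (in prob_space) integral_swap_bounded:
  fixes f :: "'a \<Rightarrow> 'a \<Rightarrow> real"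
  assumes f: "(\<lambda>(x, y). f x y) \<in> borel_measurable (M \<Otimes>\<^sub>M M)"
    and bound: "\<And>x y. x \<in> space M \<Longrightarrow> y \<in> space M \<Longrightarrow> \<bar>f x y\<bar> \<le> B"
  shows "(\<integral>x. (\<integral>y. f x y \<partial>M) \<partial>M) = (\<integral>y. (\<integral>x. f x y \<partial>M) \<partial>M)"
proof -
  interpret P: pair_prob_space M M ..
  have "integrable (M \<Otimes>\<^sub>M M) (\<lambda>(x, y). f x y)"
    using f bound
    by (intro P.P.integrable_const_bound[where B=B]) (auto intro!: AE_I2 simp: space_pair_measure)
  from P.Fubini_integral[OF this] show ?thesis by simp
qed

lemma norm_le_supnorm:
  assumes "f \<in> bmeas M" and "x \<in> space M"
  shows "norm (f x) \<le> supnorm M f"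
  using assms unfolding supnorm_def bmeas_def
  by (intro cSUP_upper) (auto simp: bounded_iff bdd_above_def)

lemma INF_pos_imp_uniform_lower_bound:
  fixes f :: "'b \<Rightarrow> real"
  assumes "0 < (INF x\<in>X. f x)" and "\<And>x. x \<in> X \<Longrightarrow> 0 \<le> f x"
  shows "\<exists>c>0. \<forall>x\<in>X. c \<le> f x"
  using assms by (intro exI[of _ "INF x\<in>X. f x"]) (auto intro!: cINF_lower bdd_belowI[where m=0])

lemma filterlim_INF_at_top_imp_uniform_lower_bound:
  fixes f :: "real \<Rightarrow> 'b \<Rightarrow> real"
  assumes lim: "filterlim (\<lambda>\<epsilon>. INF x\<in>X. f \<epsilon> x) at_top (at_right 0)"
    and nonneg: "\<And>\<epsilon> x. 0 < \<epsilon> \<Longrightarrow> x \<in> X \<Longrightarrow> 0 \<le> f \<epsilon> x"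
  shows "\<exists>\<epsilon>0>0. \<forall>\<epsilon>\<in>{0<..<\<epsilon>0}. \<forall>x\<in>X. T \<le> f \<epsilon> x"
proof -
  have "eventually (\<lambda>\<epsilon>. T \<le> (INF x\<in>X. f \<epsilon> x)) (at_right 0)"
    using lim unfolding filterlim_at_top by blast
  then obtain \<epsilon>0 where "0 < \<epsilon>0" and "\<And>\<epsilon>. 0 < \<epsilon> \<Longrightarrow> \<epsilon> < \<epsilon>0 \<Longrightarrow> T \<le> (INF x\<in>X. f \<epsilon> x)"
    unfolding eventually_at_right_field by auto
  moreover have "(INF x\<in>X. f \<epsilon> x) \<le> f \<epsilon> x" if "0 < \<epsilon>" "x \<in> X" for \<epsilon> x
    using that nonneg by (intro cINF_lower bdd_belowI[where m=0]) auto
  ultimately show ?thesis by (meson greaterThanLessThan_iff order_trans)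
qed

lemma norm_triangle_ineq3: "norm (x + y + w) \<le> norm x + norm y + norm (w :: 'a::real_normed_vector)"
  by (meson add_right_mono norm_triangle_ineq order_trans)

lemma power2_sum3_le:
  fixes p q r :: real
  shows "(p + q + r)\<^sup>2 \<le> 3 * (p\<^sup>2 + q\<^sup>2 + r\<^sup>2)"
proof -
  have "3 * (p\<^sup>2 + q\<^sup>2 + r\<^sup>2) - (p + q + r)\<^sup>2 = (p - q)\<^sup>2 + (q - r)\<^sup>2 + (p - r)\<^sup>2"
    by (simp add: power2_eq_square algebra_simps)
  thus ?thesis by (smt (verit) zero_le_power2)
qed

section \<open>The kernel\<close>

locale qve_kernel = prob_space M for M :: "'a measure" +
  fixes s :: "'a \<Rightarrow> 'a \<Rightarrow> real" and a :: "'a \<Rightarrow> real" and Bs Ba :: real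
  assumes s_measurable_pair: "(\<lambda>(x, y). s x y) \<in> borel_measurable (M \<Otimes>\<^sub>M M)"
    and s_nonneg: "\<And>x y. x \<in> space M \<Longrightarrow> y \<in> space M \<Longrightarrow> 0 \<le> s x y"
    and s_le: "\<And>x y. x \<in> space M \<Longrightarrow> y \<in> space M \<Longrightarrow> s x y \<le> Bs"
    and a_measurable [measurable]: "a \<in> borel_measurable M"
    and abs_a_le: "\<And>x. x \<in> space M \<Longrightarrow> \<bar>a x\<bar> \<le> Ba"
begin

lemmas s_measurable [measurable] = measurable_pair_compose[OF s_measurable_pair]

lemma abs_s_le: "x \<in> space M \<Longrightarrow> y \<in> space M \<Longrightarrow> \<bar>s x y\<bar> \<le> Bs"
  using s_nonneg s_le by fastforce

lemma Bs_nonneg: "0 \<le> Bs"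
  using s_nonneg s_le not_empty by (meson order_trans ex_in_conv)

lemma kern_iter_measurable_pair: "(\<lambda>(x, y). kern_iter M s n x y) \<in> borel_measurable (M \<Otimes>\<^sub>M M)"
proof (induction n)
  case (Suc n)
  note [measurable] = measurable_pair_compose[OF Suc.IH]
  show ?case by simp measurable
qed (simp add: s_measurable_pair)

lemmas kern_iter_measurable [measurable] = measurable_pair_compose[OF kern_iter_measurable_pair]

lemma kern_iter_bounds:
  "x \<in> space M \<Longrightarrow> y \<in> space M \<Longrightarrow> 0 \<le> kern_iter M s n x y \<and> kern_iter M s n x y \<le> Bs ^ Suc n"
proof (induction n arbitrary: y)
  case 0
  thus ?case using s_nonneg s_le by simp
next
  case (Suc n)
  have "integrable M (\<lambda>u. kern_iter M s n x u * s u y)"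
    using Suc.prems Suc.IH abs_s_le Bs_nonneg
    by (intro integrable_bounded[where B="Bs ^ Suc n * Bs"]) (auto simp: abs_mult intro!: mult_mono)
  moreover have "0 \<le> (\<integral>u. kern_iter M s n x u * s u y \<partial>M)"
    using Suc.prems Suc.IH s_nonneg by (intro integral_nonneg_AE) (auto intro!: AE_I2)
  ultimately show ?case
    using Suc.prems Suc.IH s_nonneg s_le Bs_nonneg
    by (auto simp: mult.commute intro!: integral_le_const AE_I2 mult_mono)
qed

lemma integrable_kern_iter_mult:
  assumes [measurable]: "f \<in> borel_measurable M" and f: "\<And>y. y \<in> space M \<Longrightarrow> \<bar>f y\<bar> \<le> B"
    and x: "x \<in> space M"
  shows "integrable M (\<lambda>y. kern_iter M s n x y * f y)"
  using x f kern_iter_bounds[OF x] Bs_nonneg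
  by (intro integrable_bounded[where B="Bs ^ Suc n * B"]) (measurable, auto simp: abs_mult intro!: mult_mono)

lemma integral_kern_iter_Suc:
  assumes [measurable]: "f \<in> borel_measurable M" and f: "\<And>y. y \<in> space M \<Longrightarrow> \<bar>f y\<bar> \<le> B"
    and x: "x \<in> space M"
  shows "(\<integral>y. kern_iter M s (Suc n) x y * f y \<partial>M) = (\<integral>u. kern_iter M s n x u * (\<integral>y. s u y * f y \<partial>M) \<partial>M)"
proof -
  have "(\<integral>y. kern_iter M s (Suc n) x y * f y \<partial>M)
      = (\<integral>y. (\<integral>u. kern_iter M s n x u * s u y * f y \<partial>M) \<partial>M)"
    by simp
  also have "\<dots> = (\<integral>u. (\<integral>y. kern_iter M s n x u * s u y * f y \<partial>M) \<partial>M)"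
  proof (rule integral_swap_bounded[where B="Bs ^ Suc n * Bs * B", symmetric])
    show "(\<lambda>(u, y). kern_iter M s n x u * s u y * f y) \<in> borel_measurable (M \<Otimes>\<^sub>M M)"
      using x by measurable
    show "\<bar>kern_iter M s n x u * s u y * f y\<bar> \<le> Bs ^ Suc n * Bs * B"
      if "u \<in> space M" "y \<in> space M" for u y
      using that x f kern_iter_bounds[OF x] abs_s_le Bs_nonneg
      by (auto simp: abs_mult intro!: mult_mono)
  qed
  also have "\<dots> = (\<integral>u. kern_iter M s n x u * (\<integral>y. s u y * f y \<partial>M) \<partial>M)"
    by (simp add: mult.assoc)
  finally show ?thesis .
qed

end

section \<open>Solutions at a fixed spectral parameter\<close>

locale qve_solution = qve_kernel +
  fixes z :: complex and m :: "'a \<Rightarrow> complex"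
  assumes Im_z_pos: "0 < Im z"
    and m_bmeas: "m \<in> bmeas M"
    and Im_m_pos: "\<And>x. x \<in> space M \<Longrightarrow> 0 < Im (m x)"
    and m_equation: "\<And>x. x \<in> space M \<Longrightarrow> - 1 / m x = z + of_real (a x) + Sop M s m x"
begin

lemma m_measurable [measurable]: "m \<in> borel_measurable M"
  using m_bmeas unfolding bmeas_def by simp

lemma norm_m_le: "x \<in> space M \<Longrightarrow> cmod (m x) \<le> supnorm M m"
  using norm_le_supnorm[OF m_bmeas] .

lemma supnorm_m_nonneg: "0 \<le> supnorm M m"
  using norm_m_le not_empty by (meson norm_ge_zero order_trans ex_in_conv)

lemma m_nonzero: "x \<in> space M \<Longrightarrow> m x \<noteq> 0"
  using Im_m_pos by force

definition v :: "'a \<Rightarrow> real" where "v x = Im (m x)"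

lemma v_measurable [measurable]: "v \<in> borel_measurable M"
  unfolding v_def by measurable

lemma v_pos: "x \<in> space M \<Longrightarrow> 0 < v x"
  using Im_m_pos by (simp add: v_def)

lemma abs_v_le: "x \<in> space M \<Longrightarrow> \<bar>v x\<bar> \<le> supnorm M m"
  unfolding v_def using norm_m_le abs_Im_le_cmod order_trans by blast

lemma integrable_v: "integrable M v"
  using abs_v_le by (intro integrable_bounded) auto

lemma integrable_s_m: "x \<in> space M \<Longrightarrow> integrable M (\<lambda>y. of_real (s x y) * m y)"
  by (intro integrable_bounded[where B="Bs * supnorm M m"])
    (measurable, auto simp: norm_mult abs_s_le norm_m_le Bs_nonneg intro!: mult_mono)

lemma integrable_s_v: "x \<in> space M \<Longrightarrow> integrable M (\<lambda>y. s x y * v y)"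
  by (intro integrable_bounded[where B="Bs * supnorm M m"])
    (measurable, auto simp: abs_mult abs_s_le abs_v_le Bs_nonneg intro!: mult_mono)

lemma Sv_nonneg: "x \<in> space M \<Longrightarrow> 0 \<le> (\<integral>y. s x y * v y \<partial>M)"
  by (intro integral_nonneg_AE AE_I2 mult_nonneg_nonneg s_nonneg less_imp_le v_pos)

lemma abs_Sv_le: "x \<in> space M \<Longrightarrow> \<bar>\<integral>y. s x y * v y \<partial>M\<bar> \<le> Bs * supnorm M m"
  using integrable_s_v Sv_nonneg s_nonneg s_le abs_v_le Bs_nonneg less_imp_le[OF v_pos]
  by (auto intro!: integral_le_const AE_I2 mult_mono simp: abs_le_iff)

lemma Sv_le: "x \<in> space M \<Longrightarrow> (\<integral>y. s x y * v y \<partial>M) \<le> Bs * (\<integral>y. v y \<partial>M)"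
  using integrable_s_v integrable_v s_le v_pos
  by (subst integral_mult_right_zero[symmetric])
    (intro integral_mono; auto intro!: mult_right_mono simp: less_imp_le)

lemma Im_equation: "x \<in> space M \<Longrightarrow> v x = (cmod (m x))\<^sup>2 * (Im z + (\<integral>y. s x y * v y \<partial>M))"
proof -
  assume x: "x \<in> space M"
  have "Im (- 1 / m x) = v x / (cmod (m x))\<^sup>2"
    by (simp add: v_def Im_divide cmod_power2)
  moreover have "Im (- 1 / m x) = Im z + Im (Sop M s m x)"
    using arg_cong[OF m_equation[OF x], of Im] by simp
  moreover have "Im (Sop M s m x) = (\<integral>y. s x y * v y \<partial>M)"
    using integral_Im[OF integrable_s_m[OF x]] by (simp add: Sop_def v_def)
  ultimately have "v x / (cmod (m x))\<^sup>2 = Im z + (\<integral>y. s x y * v y \<partial>M)" by simp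
  thus ?thesis using m_nonzero[OF x] by (simp add: field_simps)
qed

lemma v_ge:
  assumes x: "x \<in> space M" and l: "l \<le> (cmod (m x))\<^sup>2"
  shows v_ge_Im_z: "l * Im z \<le> v x" and v_ge_Sv: "l * (\<integral>y. s x y * v y \<partial>M) \<le> v x"
proof -
  let ?Sv = "\<integral>y. s x y * v y \<partial>M"
  have "l * Im z \<le> (cmod (m x))\<^sup>2 * Im z" "l * ?Sv \<le> (cmod (m x))\<^sup>2 * ?Sv"
    using l Im_z_pos Sv_nonneg[OF x] by (auto intro!: mult_right_mono)
  moreover have "0 \<le> (cmod (m x))\<^sup>2 * Im z" "0 \<le> (cmod (m x))\<^sup>2 * ?Sv"
    using Im_z_pos Sv_nonneg[OF x] by simp_all
  moreover have "v x = (cmod (m x))\<^sup>2 * Im z + (cmod (m x))\<^sup>2 * ?Sv"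
    using Im_equation[OF x] by (simp add: distrib_left)
  ultimately show "l * Im z \<le> v x" "l * ?Sv \<le> v x" by linarith+
qed

lemma norm_Sop_le:
  assumes x: "x \<in> space M" and U: "\<And>y. y \<in> space M \<Longrightarrow> cmod (m y) \<le> U"
  shows "cmod (Sop M s m x) \<le> Bs * U"
proof -
  have "cmod (Sop M s m x) \<le> (\<integral>y. cmod (of_real (s x y) * m y) \<partial>M)"
    unfolding Sop_def by (rule integral_norm_bound)
  also have "\<dots> \<le> Bs * U"
    using x U integrable_norm[OF integrable_s_m[OF x]]
    by (intro integral_le_const) (auto simp: norm_mult abs_s_le Bs_nonneg intro!: AE_I2 mult_mono)
  finally show ?thesis .
qed

lemma norm_inverse_m_le:
  assumes x: "x \<in> space M" and U: "\<And>y. y \<in> space M \<Longrightarrow> cmod (m y) \<le> U"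
  shows "cmod (1 / m x) \<le> cmod z + Ba + Bs * U"
proof -
  have "cmod (1 / m x) = cmod (z + of_real (a x) + Sop M s m x)"
    using m_equation[OF x] by (metis minus_divide_left norm_minus_cancel)
  also have "\<dots> \<le> cmod z + \<bar>a x\<bar> + cmod (Sop M s m x)"
    using norm_triangle_ineq3 by (metis norm_of_real)
  also have "\<dots> \<le> cmod z + Ba + Bs * U"
    using abs_a_le[OF x] norm_Sop_le[OF x U] by simp
  finally show ?thesis .
qed

lemma norm_m_ge:
  assumes x: "x \<in> space M" and U: "\<And>y. y \<in> space M \<Longrightarrow> cmod (m y) \<le> U" and Z: "cmod z \<le> Z"
  shows norm_m_ge_pos: "0 < Z + Ba + Bs * U" and "1 / (Z + Ba + Bs * U) \<le> cmod (m x)"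
proof -
  have inv: "0 < cmod (1 / m x)" using m_nonzero[OF x] by simp
  thus "0 < Z + Ba + Bs * U" using norm_inverse_m_le[OF x U] Z by linarith
  have "inverse (Z + Ba + Bs * U) \<le> inverse (cmod (1 / m x))"
    using norm_inverse_m_le[OF x U] Z inv by (intro le_imp_inverse_le) auto
  thus "1 / (Z + Ba + Bs * U) \<le> cmod (m x)" by (simp add: inverse_eq_divide norm_divide)
qed

lemma v_bounded_below: "\<exists>c>0. \<forall>x\<in>space M. c \<le> v x"
proof -
  define D where "D = cmod z + Ba + Bs * supnorm M m"
  obtain x0 where x0: "x0 \<in> space M" using not_empty by blast
  have D: "0 < D" unfolding D_def by (rule norm_m_ge_pos[OF x0 norm_m_le order_refl])
  have "Im z / D\<^sup>2 \<le> v x" if x: "x \<in> space M" for x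
  proof -
    have "(1 / D)\<^sup>2 \<le> (cmod (m x))\<^sup>2"
      using norm_m_ge(2)[OF x norm_m_le order_refl] D by (intro power_mono) (auto simp: D_def)
    from v_ge_Im_z[OF x this] show ?thesis by (simp add: power_divide)
  qed
  thus ?thesis using D Im_z_pos by (intro exI[of _ "Im z / D\<^sup>2"]) auto
qed

lemma inverse_m_sq_le:
  assumes x: "x \<in> space M" and y: "y \<in> space M" and L: "(\<integral>u. (cmod (m u))\<^sup>2 \<partial>M) \<le> L"
  shows "(cmod (1 / m y))\<^sup>2
    \<le> 3 * ((cmod (1 / m x))\<^sup>2 + (a x - a y)\<^sup>2 + L * (\<integral>u. (s x u - s y u)\<^sup>2 \<partial>M))"
proof -
  define I where "I = (\<integral>u. \<bar>s x u - s y u\<bar> * cmod (m u) \<partial>M)"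
  have "1 / m x = - (z + of_real (a x) + Sop M s m x)" "1 / m y = - (z + of_real (a y) + Sop M s m y)"
    using m_equation[OF x] m_equation[OF y] by (metis minus_divide_left minus_minus)+
  hence "1 / m y = 1 / m x + of_real (a x - a y) + (Sop M s m x - Sop M s m y)"
    by (simp add: algebra_simps)
  hence "cmod (1 / m y) \<le> cmod (1 / m x) + \<bar>a x - a y\<bar> + cmod (Sop M s m x - Sop M s m y)"
    using norm_triangle_ineq3 by (metis norm_of_real)
  moreover have "cmod (Sop M s m x - Sop M s m y) \<le> I"
  proof -
    have diff: "Sop M s m x - Sop M s m y = (\<integral>u. of_real (s x u - s y u) * m u \<partial>M)"
      unfolding Sop_def using integrable_s_m[OF x] integrable_s_m[OF y]
      by (simp add: algebra_simps flip: Bochner_Integration.integral_diff)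
    show ?thesis
      unfolding I_def diff using integral_norm_bound[of M "\<lambda>u. of_real (s x u - s y u) * m u"]
      by (simp only: norm_mult norm_of_real)
  qed
  ultimately have "cmod (1 / m y) \<le> cmod (1 / m x) + \<bar>a x - a y\<bar> + I"
    by linarith
  hence "(cmod (1 / m y))\<^sup>2 \<le> (cmod (1 / m x) + \<bar>a x - a y\<bar> + I)\<^sup>2"
    by (intro power_mono) auto
  also have "\<dots> \<le> 3 * ((cmod (1 / m x))\<^sup>2 + (a x - a y)\<^sup>2 + I\<^sup>2)"
    using power2_sum3_le[of "cmod (1 / m x)" "\<bar>a x - a y\<bar>" I] by simp
  also have "I\<^sup>2 \<le> L * (\<integral>u. (s x u - s y u)\<^sup>2 \<partial>M)"
  proof -
    have "\<bar>s x u - s y u\<bar>\<^sup>2 \<le> Bs\<^sup>2" if "u \<in> space M" for u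
      using s_nonneg[OF x that] s_le[OF x that] s_nonneg[OF y that] s_le[OF y that]
      by (intro power_mono) (auto simp: abs_le_iff)
    moreover have "(cmod (m u))\<^sup>2 \<le> (supnorm M m)\<^sup>2" if "u \<in> space M" for u
      using that norm_m_le by (intro power_mono) auto
    ultimately have "I\<^sup>2 \<le> (\<integral>u. \<bar>s x u - s y u\<bar>\<^sup>2 \<partial>M) * (\<integral>u. (cmod (m u))\<^sup>2 \<partial>M)"
      unfolding I_def using x y
      by (intro Cauchy_Schwarz_integral integrable_bounded[where B="Bs\<^sup>2"]
          integrable_bounded[where B="(supnorm M m)\<^sup>2"]) simp_all
    also have "\<dots> \<le> (\<integral>u. (s x u - s y u)\<^sup>2 \<partial>M) * L"
      using L by simp (auto intro!: mult_left_mono integral_nonneg_AE)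
    finally show ?thesis by (simp add: mult.commute)
  qed
  finally show ?thesis by simp
qed

lemma integral_inverse_distance_le:
  assumes x: "x \<in> space M" and L: "(\<integral>u. (cmod (m u))\<^sup>2 \<partial>M) \<le> L"
    and e: "max 1 L * e = (cmod (1 / m x))\<^sup>2"
  shows "(\<integral>y. 1 / (e + (a x - a y)\<^sup>2 + (\<integral>u. (s x u - s y u)\<^sup>2 \<partial>M)) \<partial>M) \<le> 3 * max 1 L * L"
proof -
  define K where "K = max 1 L"
  define D where "D y = e + (a x - a y)\<^sup>2 + (\<integral>u. (s x u - s y u)\<^sup>2 \<partial>M)" for y
  have K: "1 \<le> K" "L \<le> K" unfolding K_def by auto
  have "0 < K * e" using e m_nonzero[OF x] by (simp add: K_def)
  hence e_pos: "0 < e" using K by (simp add: zero_less_mult_iff)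
  have P_nonneg: "0 \<le> (\<integral>u. (s x u - s y u)\<^sup>2 \<partial>M)" for y
    by (intro integral_nonneg_AE) auto
  have D_ge: "e \<le> D y" for y using P_nonneg by (simp add: D_def)
  have pointwise: "1 / D y \<le> 3 * K * (cmod (m y))\<^sup>2" if y: "y \<in> space M" for y
  proof -
    have "(a x - a y)\<^sup>2 \<le> K * (a x - a y)\<^sup>2"
      and "L * (\<integral>u. (s x u - s y u)\<^sup>2 \<partial>M) \<le> K * (\<integral>u. (s x u - s y u)\<^sup>2 \<partial>M)"
      using K P_nonneg by (auto intro: mult_right_mono[of 1 K, simplified] mult_right_mono)
    hence "1 / (cmod (m y))\<^sup>2 \<le> 3 * K * D y"
      using inverse_m_sq_le[OF x y L] e
      by (simp add: D_def K_def norm_divide power_one_over algebra_simps)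
    moreover have "0 < (cmod (m y))\<^sup>2" "0 < D y" using m_nonzero[OF y] D_ge[of y] e_pos by auto
    ultimately show ?thesis using K by (simp add: field_simps)
  qed
  have "(\<integral>y. 1 / D y \<partial>M) \<le> (\<integral>y. 3 * K * (cmod (m y))\<^sup>2 \<partial>M)"
  proof (rule integral_mono[OF _ _ pointwise])
    show "integrable M (\<lambda>y. 1 / D y)"
      using x D_ge e_pos unfolding D_def
      by (intro integrable_bounded[where B="1 / e"]) (measurable, auto simp: frac_le)
    show "integrable M (\<lambda>y. 3 * K * (cmod (m y))\<^sup>2)"
      using K norm_m_le
      by (intro integrable_bounded[where B="3 * K * (supnorm M m)\<^sup>2"])
        (measurable, auto intro!: mult_left_mono power_mono)
  qed
  also have "\<dots> \<le> 3 * K * L" using L K by simp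
  finally show ?thesis by (simp add: D_def K_def)
qed

lemma norm_m_le_of_L2_bound:
  assumes L: "(\<integral>u. (cmod (m u))\<^sup>2 \<partial>M) \<le> L" and \<epsilon>0: "0 < \<epsilon>0"
    and C: "\<And>\<epsilon> x. 0 < \<epsilon> \<Longrightarrow> \<epsilon> < \<epsilon>0 \<Longrightarrow> x \<in> space M \<Longrightarrow>
      3 * max 1 L * L < (\<integral>y. 1 / (\<epsilon> + (a x - a y)\<^sup>2 + (\<integral>u. (s x u - s y u)\<^sup>2 \<partial>M)) \<partial>M)"
    and x: "x \<in> space M"
  shows "cmod (m x) \<le> 1 / sqrt (max 1 L * \<epsilon>0)"
proof -
  define e where "e = (cmod (1 / m x))\<^sup>2 / max 1 L"
  have e: "max 1 L * e = (cmod (1 / m x))\<^sup>2" by (simp add: e_def)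
  have "0 < e" using m_nonzero[OF x] by (simp add: e_def)
  \<comment> \<open>otherwise (C) at \<open>\<epsilon> = e\<close> would contradict the \<open>L\<^sup>2\<close> bound\<close>
  hence "\<epsilon>0 \<le> e"
    using C[of e x] integral_inverse_distance_le[OF x L e] x by force
  hence "max 1 L * \<epsilon>0 \<le> (cmod (1 / m x))\<^sup>2" by (simp add: e_def field_simps)
  hence "sqrt (max 1 L * \<epsilon>0) \<le> cmod (1 / m x)" using real_sqrt_le_mono by fastforce
  hence "inverse (cmod (1 / m x)) \<le> inverse (sqrt (max 1 L * \<epsilon>0))"
    using \<epsilon>0 by (intro le_imp_inverse_le) auto
  thus ?thesis by (simp add: inverse_eq_divide norm_divide)
qed

lemma v_ge_kern_iter_integral:
  assumes l: "0 < l" and lo: "\<And>x. x \<in> space M \<Longrightarrow> l \<le> (cmod (m x))\<^sup>2" and x: "x \<in> space M"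
  shows "l ^ Suc n * (\<integral>y. kern_iter M s n x y * v y \<partial>M) \<le> v x"
  using x
proof (induction n arbitrary: x)
  case 0
  thus ?case using v_ge_Sv[OF 0 lo[OF 0]] by simp
next
  case (Suc n)
  let ?Sv = "\<lambda>u. \<integral>y. s u y * v y \<partial>M"
  have "l ^ Suc (Suc n) * (\<integral>y. kern_iter M s (Suc n) x y * v y \<partial>M)
      = l ^ Suc n * (\<integral>u. l * (kern_iter M s n x u * ?Sv u) \<partial>M)"
    using integral_kern_iter_Suc[OF v_measurable abs_v_le Suc.prems] by simp
  also have "\<dots> \<le> l ^ Suc n * (\<integral>u. kern_iter M s n x u * v u \<partial>M)"
  proof (intro mult_left_mono integral_mono)
    show "integrable M (\<lambda>u. l * (kern_iter M s n x u * ?Sv u))"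
      using integrable_kern_iter_mult[OF _ abs_Sv_le Suc.prems] by simp
    show "integrable M (\<lambda>u. kern_iter M s n x u * v u)"
      by (rule integrable_kern_iter_mult[OF v_measurable abs_v_le Suc.prems])
    show "l * (kern_iter M s n x u * ?Sv u) \<le> kern_iter M s n x u * v u" if u: "u \<in> space M" for u
    proof -
      have "kern_iter M s n x u * (l * ?Sv u) \<le> kern_iter M s n x u * v u"
        using v_ge_Sv[OF u lo[OF u]] kern_iter_bounds[OF Suc.prems u] by (intro mult_left_mono) auto
      thus ?thesis by (simp add: mult.left_commute)
    qed
  qed (use l in simp)
  also have "\<dots> \<le> v x" by (rule Suc.IH[OF Suc.prems])
  finally show ?case .
qed

lemma v_ge_integral_v:
  assumes l: "0 < l" and lo: "\<And>x. x \<in> space M \<Longrightarrow> l \<le> (cmod (m x))\<^sup>2"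
    and kern: "\<And>x y. x \<in> space M \<Longrightarrow> y \<in> space M \<Longrightarrow> \<delta> \<le> kern_iter M s n x y"
    and y: "y \<in> space M"
  shows "l ^ Suc n * \<delta> * (\<integral>u. v u \<partial>M) \<le> v y"
proof -
  have "\<delta> * (\<integral>u. v u \<partial>M) \<le> (\<integral>u. kern_iter M s n y u * v u \<partial>M)"
    using integrable_v integrable_kern_iter_mult[OF v_measurable abs_v_le y] kern[OF y] v_pos
    by (subst integral_mult_right_zero[symmetric])
      (intro integral_mono; auto intro!: mult_right_mono simp: less_imp_le)
  hence "l ^ Suc n * \<delta> * (\<integral>u. v u \<partial>M) \<le> l ^ Suc n * (\<integral>u. kern_iter M s n y u * v u \<partial>M)"
    using l by (simp add: mult.assoc mult_left_mono)
  also have "\<dots> \<le> v y" by (rule v_ge_kern_iter_integral[OF l lo y])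
  finally show ?thesis .
qed

lemma v_le_mult_v:
  assumes l: "0 < l" and lo: "\<And>x. x \<in> space M \<Longrightarrow> l \<le> (cmod (m x))\<^sup>2"
    and hi: "\<And>x. x \<in> space M \<Longrightarrow> (cmod (m x))\<^sup>2 \<le> h"
    and \<delta>: "0 < \<delta>" and kern: "\<And>x y. x \<in> space M \<Longrightarrow> y \<in> space M \<Longrightarrow> \<delta> \<le> kern_iter M s n x y"
    and x: "x \<in> space M" and y: "y \<in> space M"
  shows "v x \<le> h * (1 / l + Bs / (l ^ Suc n * \<delta>)) * v y"
proof -
  have "v x \<le> h * (Im z + Bs * (\<integral>u. v u \<partial>M))"
    unfolding Im_equation[OF x] using hi[OF x] Sv_le[OF x] Sv_nonneg[OF x] Im_z_pos
      order_trans[OF zero_le_power2 hi[OF x]]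
    by (intro mult_mono) auto
  also have "\<dots> \<le> h * (v y / l + Bs * (v y / (l ^ Suc n * \<delta>)))"
  proof (rule mult_left_mono[OF add_mono])
    show "Im z \<le> v y / l" using v_ge_Im_z[OF y lo[OF y]] l by (simp add: field_simps)
    show "Bs * (\<integral>u. v u \<partial>M) \<le> Bs * (v y / (l ^ Suc n * \<delta>))"
      using v_ge_integral_v[OF l lo kern y] l \<delta> Bs_nonneg
      by (intro mult_left_mono) (auto simp: field_simps)
    show "0 \<le> h" using hi[OF x] by (meson order_trans zero_le_power2)
  qed
  also have "\<dots> = h * (1 / l + Bs / (l ^ Suc n * \<delta>)) * v y" by (simp add: field_simps)
  finally show ?thesis .
qed

end

section \<open>The \<open>L\<^sup>2\<close> bound under assumption (A)\<close>

locale qve_factor = qve_kernel +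
  fixes r :: "'a \<Rightarrow> 'a \<Rightarrow> real" and Br \<rho> :: real
  assumes r_measurable_pair: "(\<lambda>(x, y). r x y) \<in> borel_measurable (M \<Otimes>\<^sub>M M)"
    and r_nonneg: "\<And>x y. x \<in> space M \<Longrightarrow> y \<in> space M \<Longrightarrow> 0 \<le> r x y"
    and r_le: "\<And>x y. x \<in> space M \<Longrightarrow> y \<in> space M \<Longrightarrow> r x y \<le> Br"
    and r_sym: "\<And>x y. x \<in> space M \<Longrightarrow> y \<in> space M \<Longrightarrow> r x y = r y x"
    and r_r_le_s: "\<And>x y. x \<in> space M \<Longrightarrow> y \<in> space M \<Longrightarrow> (\<integral>u. r x u * r u y \<partial>M) \<le> s x y"
    and \<rho>_le_integral_r: "\<And>x. x \<in> space M \<Longrightarrow> \<rho> \<le> (\<integral>y. r x y \<partial>M)"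
    and \<rho>_pos: "0 < \<rho>"
begin

lemmas r_measurable [measurable] = measurable_pair_compose[OF r_measurable_pair]

lemma abs_r_le: "x \<in> space M \<Longrightarrow> y \<in> space M \<Longrightarrow> \<bar>r x y\<bar> \<le> Br"
  using r_nonneg r_le by fastforce

lemma Br_nonneg: "0 \<le> Br"
  using r_nonneg r_le not_empty by (meson order_trans ex_in_conv)

lemma integrable_r: "x \<in> space M \<Longrightarrow> integrable M (\<lambda>y. r x y)"
  by (intro integrable_bounded[where B=Br]) (auto simp: abs_r_le)

end

locale qve_factor_solution = qve_factor + qve_solution
begin

definition w :: "'a \<Rightarrow> real" where "w u = (\<integral>y. r u y * v y \<partial>M)"

lemma w_measurable [measurable]: "w \<in> borel_measurable M"
  unfolding w_def by measurable

lemma integrable_r_v: "u \<in> space M \<Longrightarrow> integrable M (\<lambda>y. r u y * v y)"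
  by (intro integrable_bounded[where B="Br * supnorm M m"])
    (measurable, auto simp: abs_mult abs_r_le abs_v_le Br_nonneg intro!: mult_mono)

lemma w_bounded_below: "\<exists>c>0. \<forall>u\<in>space M. c \<le> w u"
proof -
  obtain c where c: "0 < c" "\<And>y. y \<in> space M \<Longrightarrow> c \<le> v y"
    using v_bounded_below by blast
  have "\<rho> * c \<le> w u" if u: "u \<in> space M" for u
  proof -
    have "\<rho> * c \<le> (\<integral>y. r u y \<partial>M) * c"
      using \<rho>_le_integral_r[OF u] c by (intro mult_right_mono) auto
    also have "\<dots> = (\<integral>y. r u y * c \<partial>M)" by simp
    also have "\<dots> \<le> w u"
      unfolding w_def using integrable_r[OF u] integrable_r_v[OF u] c r_nonneg[OF u]
      by (intro integral_mono) (auto intro!: mult_left_mono)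
    finally show ?thesis .
  qed
  thus ?thesis using \<rho>_pos c by (intro exI[of _ "\<rho> * c"]) auto
qed

lemma w_pos: "u \<in> space M \<Longrightarrow> 0 < w u"
  using w_bounded_below by force

lemma abs_w_le: "u \<in> space M \<Longrightarrow> \<bar>w u\<bar> \<le> Br * supnorm M m"
  unfolding w_def using integrable_r_v w_pos[unfolded w_def] r_nonneg r_le abs_v_le Br_nonneg
  by (auto intro!: integral_le_const AE_I2 mult_mono simp: abs_le_iff less_imp_le v_pos)

lemma r_div_w_bounded: "\<exists>B. \<forall>x\<in>space M. \<forall>u\<in>space M. \<bar>r x u / w u\<bar> \<le> B"
proof -
  obtain c where c: "0 < c" "\<And>u. u \<in> space M \<Longrightarrow> c \<le> w u"
    using w_bounded_below by blast
  have "\<bar>r x u / w u\<bar> \<le> Br / c" if "x \<in> space M" "u \<in> space M" for x u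
    using r_nonneg[OF that] r_le[OF that] c(1) c(2)[OF that(2)] Br_nonneg
    by (simp add: abs_of_nonneg) (meson divide_mono less_le_trans)
  thus ?thesis by blast
qed

lemma integrable_r_div_w:
  assumes x: "x \<in> space M"
  shows "integrable M (\<lambda>u. r x u / w u)"
proof -
  obtain B where "\<forall>x\<in>space M. \<forall>u\<in>space M. \<bar>r x u / w u\<bar> \<le> B"
    using r_div_w_bounded by blast
  thus ?thesis using x by (intro integrable_bounded[where B=B]) auto
qed

lemma integrable_r_w: "x \<in> space M \<Longrightarrow> integrable M (\<lambda>u. r x u * w u)"
  by (intro integrable_bounded[where B="Br * (Br * supnorm M m)"])
    (measurable, auto simp: abs_mult abs_r_le abs_w_le Br_nonneg intro!: mult_mono)

lemma integral_r_w_le_Sv: "x \<in> space M \<Longrightarrow> (\<integral>u. r x u * w u \<partial>M) \<le> (\<integral>y. s x y * v y \<partial>M)"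
proof -
  assume x: "x \<in> space M"
  have "(\<integral>u. r x u * w u \<partial>M) = (\<integral>u. (\<integral>y. r x u * r u y * v y \<partial>M) \<partial>M)"
    unfolding w_def by (simp add: mult.assoc)
  also have "\<dots> = (\<integral>y. (\<integral>u. r x u * r u y * v y \<partial>M) \<partial>M)"
    using x abs_r_le abs_v_le Br_nonneg
    by (intro integral_swap_bounded[where B="Br * Br * supnorm M m"])
      (measurable, auto simp: abs_mult intro!: mult_mono)
  also have "\<dots> = (\<integral>y. (\<integral>u. r x u * r u y \<partial>M) * v y \<partial>M)"
    by simp
  also have "\<dots> \<le> (\<integral>y. s x y * v y \<partial>M)"
  proof (rule integral_mono)
    have "\<bar>\<integral>u. r x u * r u y \<partial>M\<bar> \<le> Br * Br" if y: "y \<in> space M" for y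
    proof -
      have "integrable M (\<lambda>u. r x u * r u y)"
        using x y abs_r_le Br_nonneg
        by (intro integrable_bounded[where B="Br * Br"]) (measurable, auto simp: abs_mult intro!: mult_mono)
      moreover have "0 \<le> (\<integral>u. r x u * r u y \<partial>M)"
        using x y r_nonneg by (intro integral_nonneg_AE AE_I2 mult_nonneg_nonneg) auto
      ultimately show ?thesis
        using x y r_nonneg r_le Br_nonneg by (auto intro!: integral_le_const AE_I2 mult_mono)
    qed
    thus "integrable M (\<lambda>y. (\<integral>u. r x u * r u y \<partial>M) * v y)"
      using x abs_v_le Br_nonneg
      by (intro integrable_bounded[where B="Br * Br * supnorm M m"])
        (measurable, auto simp: abs_mult intro!: mult_mono)
    show "integrable M (\<lambda>y. s x y * v y)" by (rule integrable_s_v[OF x])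
    show "(\<integral>u. r x u * r u y \<partial>M) * v y \<le> s x y * v y" if "y \<in> space M" for y
      using r_r_le_s[OF x that] v_pos[OF that] by (intro mult_right_mono) auto
  qed
  finally show ?thesis .
qed

lemma integral_r_sq_le:
  assumes x: "x \<in> space M"
  shows "(\<integral>u. r x u \<partial>M)\<^sup>2 \<le> (\<integral>u. r x u * w u \<partial>M) * (\<integral>u. r x u / w u \<partial>M)"
proof -
  define f where "f u = sqrt (r x u * w u)" for u
  define g where "g u = sqrt (r x u / w u)" for u
  have fg: "f u * g u = r x u" and f2: "(f u)\<^sup>2 = r x u * w u" and g2: "(g u)\<^sup>2 = r x u / w u"
    if "u \<in> space M" for u
    using r_nonneg[OF x that] w_pos[OF that]
    by (simp_all add: f_def g_def flip: real_sqrt_mult)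
  have "(\<integral>u. r x u \<partial>M) = (\<integral>u. f u * g u \<partial>M)"
    using fg by (intro Bochner_Integration.integral_cong) auto
  moreover have "(\<integral>u. (f u)\<^sup>2 \<partial>M) = (\<integral>u. r x u * w u \<partial>M)"
    and "(\<integral>u. (g u)\<^sup>2 \<partial>M) = (\<integral>u. r x u / w u \<partial>M)"
    using f2 g2 by (auto intro: Bochner_Integration.integral_cong)
  moreover have "(\<integral>u. f u * g u \<partial>M)\<^sup>2 \<le> (\<integral>u. (f u)\<^sup>2 \<partial>M) * (\<integral>u. (g u)\<^sup>2 \<partial>M)"
  proof (rule Cauchy_Schwarz_integral)
    show "f \<in> borel_measurable M" "g \<in> borel_measurable M"
      unfolding f_def g_def using x by measurable
    show "integrable M (\<lambda>u. (f u)\<^sup>2)"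
      using integrable_r_w[OF x] f2 by (simp cong: Bochner_Integration.integrable_cong)
    show "integrable M (\<lambda>u. (g u)\<^sup>2)"
      using integrable_r_div_w[OF x] g2 by (simp cong: Bochner_Integration.integrable_cong)
  qed
  ultimately show ?thesis by simp
qed

lemma norm_m_sq_le:
  assumes x: "x \<in> space M"
  shows "(cmod (m x))\<^sup>2 \<le> v x * (\<integral>u. r x u / w u \<partial>M) / \<rho>\<^sup>2"
proof -
  let ?A = "\<integral>u. r x u * w u \<partial>M" and ?G = "\<integral>u. r x u / w u \<partial>M"
  have G: "0 \<le> ?G"
    using x r_nonneg w_pos by (intro integral_nonneg_AE AE_I2 divide_nonneg_nonneg) (auto simp: less_imp_le)
  have "\<rho>\<^sup>2 \<le> (\<integral>u. r x u \<partial>M)\<^sup>2"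
    using \<rho>_le_integral_r[OF x] \<rho>_pos by (intro power_mono) auto
  also have "\<dots> \<le> ?A * ?G" by (rule integral_r_sq_le[OF x])
  finally have "(cmod (m x))\<^sup>2 * \<rho>\<^sup>2 \<le> (cmod (m x))\<^sup>2 * ?A * ?G"
    by (simp add: mult.assoc mult_left_mono)
  also have "\<dots> \<le> v x * ?G"
  proof (rule mult_right_mono[OF _ G])
    have "?A \<le> Im z + (\<integral>y. s x y * v y \<partial>M)" using integral_r_w_le_Sv[OF x] Im_z_pos by simp
    thus "(cmod (m x))\<^sup>2 * ?A \<le> v x" unfolding Im_equation[OF x] by (intro mult_left_mono) auto
  qed
  finally show ?thesis using \<rho>_pos by (simp add: field_simps)
qed

lemma integral_v_r_div_w: "(\<integral>x. v x * (\<integral>u. r x u / w u \<partial>M) \<partial>M) = 1"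
proof -
  obtain B where B: "\<And>x u. x \<in> space M \<Longrightarrow> u \<in> space M \<Longrightarrow> \<bar>r x u / w u\<bar> \<le> B"
    using r_div_w_bounded by blast
  have "(\<integral>x. v x * (\<integral>u. r x u / w u \<partial>M) \<partial>M) = (\<integral>x. (\<integral>u. v x * (r x u / w u) \<partial>M) \<partial>M)"
    by (simp only: integral_mult_right_zero)
  also have "\<dots> = (\<integral>u. (\<integral>x. v x * (r x u / w u) \<partial>M) \<partial>M)"
  proof (rule integral_swap_bounded[where B="supnorm M m * B"])
    show "\<bar>v x * (r x u / w u)\<bar> \<le> supnorm M m * B" if "x \<in> space M" "u \<in> space M" for x u
      unfolding abs_mult using abs_v_le[OF that(1)] B[OF that] supnorm_m_nonneg
      by (intro mult_mono) auto
  qed measurable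
  also have "\<dots> = (\<integral>u. 1 \<partial>M)"
  proof (rule Bochner_Integration.integral_cong[OF refl])
    fix u assume u: "u \<in> space M"
    \<comment> \<open>symmetry of \<open>r\<close> turns the inner integral into \<open>w u\<close>\<close>
    have "(\<integral>x. v x * (r x u / w u) \<partial>M) = (\<integral>x. r u x * v x \<partial>M) / w u"
      using r_sym[OF _ u] by (simp add: ac_simps cong: Bochner_Integration.integral_cong)
    thus "(\<integral>x. v x * (r x u / w u) \<partial>M) = 1" using w_pos[OF u] by (simp add: w_def)
  qed
  finally show ?thesis by (simp add: prob_space)
qed

lemma integral_norm_m_sq_le: "(\<integral>x. (cmod (m x))\<^sup>2 \<partial>M) \<le> 1 / \<rho>\<^sup>2"
proof -
  obtain B where B: "\<And>x u. x \<in> space M \<Longrightarrow> u \<in> space M \<Longrightarrow> \<bar>r x u / w u\<bar> \<le> B"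
    using r_div_w_bounded by blast
  have G: "\<bar>\<integral>u. r x u / w u \<partial>M\<bar> \<le> B" if x: "x \<in> space M" for x
  proof -
    have "0 \<le> (\<integral>u. r x u / w u \<partial>M)"
      using x r_nonneg w_pos by (intro integral_nonneg_AE AE_I2 divide_nonneg_nonneg) (auto simp: less_imp_le)
    moreover have "(\<integral>u. r x u / w u \<partial>M) \<le> B"
      by (intro integral_le_const[OF integrable_r_div_w[OF x]] AE_I2 abs_le_D1[OF B[OF x]])
    ultimately show ?thesis by simp
  qed
  have "(\<integral>x. (cmod (m x))\<^sup>2 \<partial>M) \<le> (\<integral>x. v x * (\<integral>u. r x u / w u \<partial>M) / \<rho>\<^sup>2 \<partial>M)"
  proof (rule integral_mono[OF _ _ norm_m_sq_le])
    show "integrable M (\<lambda>x. (cmod (m x))\<^sup>2)"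
      using norm_m_le by (intro integrable_bounded[where B="(supnorm M m)\<^sup>2"]) (auto intro!: power_mono)
    show "integrable M (\<lambda>x. v x * (\<integral>u. r x u / w u \<partial>M) / \<rho>\<^sup>2)"
      using abs_v_le G supnorm_m_nonneg
      by (intro integrable_bounded[where B="supnorm M m * B / \<rho>\<^sup>2"])
        (measurable, auto simp: abs_mult intro!: divide_right_mono mult_mono)
  qed
  also have "\<dots> = 1 / \<rho>\<^sup>2" using integral_v_r_div_w by simp
  finally show ?thesis .
qed

end

section \<open>Uniform bounds\<close>

text \<open>Assumptions (B) and (C) in pointwise form; (B) enters with \<open>n = K - 1\<close>.\<close>

locale qve_regular = qve_factor +
  fixes n :: nat and \<delta> :: real
  assumes \<delta>_pos: "0 < \<delta>"
    and kern_iter_ge: "\<And>x y. x \<in> space M \<Longrightarrow> y \<in> space M \<Longrightarrow> \<delta> \<le> kern_iter M s n x y"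
    and kernel_distance: "\<And>T. \<exists>\<epsilon>0>0. \<forall>\<epsilon>\<in>{0<..<\<epsilon>0}. \<forall>x\<in>space M.
      T \<le> (\<integral>y. 1 / (\<epsilon> + (a x - a y)\<^sup>2 + (\<integral>u. (s x u - s y u)\<^sup>2 \<partial>M)) \<partial>M)"
begin

lemma kernel_distance_threshold:
  "\<exists>\<epsilon>0>0. \<forall>\<epsilon> x. 0 < \<epsilon> \<longrightarrow> \<epsilon> < \<epsilon>0 \<longrightarrow> x \<in> space M \<longrightarrow>
     T < (\<integral>y. 1 / (\<epsilon> + (a x - a y)\<^sup>2 + (\<integral>u. (s x u - s y u)\<^sup>2 \<partial>M)) \<partial>M)"
proof -
  obtain \<epsilon>0 where "0 < \<epsilon>0" and ge: "\<forall>\<epsilon>\<in>{0<..<\<epsilon>0}. \<forall>x\<in>space M.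
      T + 1 \<le> (\<integral>y. 1 / (\<epsilon> + (a x - a y)\<^sup>2 + (\<integral>u. (s x u - s y u)\<^sup>2 \<partial>M)) \<partial>M)"
    using kernel_distance by blast
  moreover have "T < (\<integral>y. 1 / (\<epsilon> + (a x - a y)\<^sup>2 + (\<integral>u. (s x u - s y u)\<^sup>2 \<partial>M)) \<partial>M)"
    if "0 < \<epsilon>" "\<epsilon> < \<epsilon>0" "x \<in> space M" for \<epsilon> x
  proof -
    have "\<epsilon> \<in> {0<..<\<epsilon>0}" using that by simp
    with ge that(3) show ?thesis by fastforce
  qed
  ultimately show ?thesis by blast
qed

lemma uniform_solution_bounds:
  "\<exists>c>0. \<forall>z m x y. qve_solution M s a Bs Ba z m \<and> cmod z \<le> Z \<and> x \<in> space M \<and> y \<in> space M \<longrightarrow>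
     1 / c \<le> cmod (m x) \<and> cmod (m x) \<le> c \<and> Im (m x) \<le> c * Im (m y)"
proof -
  define L where "L = 1 / \<rho>\<^sup>2"
  obtain \<epsilon>0 where \<epsilon>0: "0 < \<epsilon>0" and distance: "\<And>\<epsilon> x. 0 < \<epsilon> \<Longrightarrow> \<epsilon> < \<epsilon>0 \<Longrightarrow> x \<in> space M \<Longrightarrow>
      3 * max 1 L * L < (\<integral>y. 1 / (\<epsilon> + (a x - a y)\<^sup>2 + (\<integral>u. (s x u - s y u)\<^sup>2 \<partial>M)) \<partial>M)"
    using kernel_distance_threshold by blast
  define U where "U = 1 / sqrt (max 1 L * \<epsilon>0)"
  define D where "D = Z + Ba + Bs * U"
  define R where "R = U\<^sup>2 * (D\<^sup>2 + Bs / ((1 / D)\<^sup>2 ^ Suc n * \<delta>))"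
  define c where "c = max (max U D) (max R 1)"
  have "1 / c \<le> cmod (m x) \<and> cmod (m x) \<le> c \<and> Im (m x) \<le> c * Im (m y)"
    if sol: "qve_solution M s a Bs Ba z m" and z: "cmod z \<le> Z" and x: "x \<in> space M" and y: "y \<in> space M"
    for z m x y
  proof -
    interpret qve_factor_solution M s a Bs Ba r Br \<rho> z m
      using sol by (simp add: qve_factor_solution_def qve_factor_axioms)
    have up: "cmod (m u) \<le> U" if "u \<in> space M" for u
      unfolding U_def using norm_m_le_of_L2_bound[OF integral_norm_m_sq_le[folded L_def] \<epsilon>0 distance that] .
    have D: "0 < D" unfolding D_def by (rule norm_m_ge_pos[OF x up z])
    have lo: "1 / D \<le> cmod (m u)" if "u \<in> space M" for u
      unfolding D_def by (rule norm_m_ge(2)[OF that up z])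
    have "v x \<le> U\<^sup>2 * (1 / (1 / D)\<^sup>2 + Bs / ((1 / D)\<^sup>2 ^ Suc n * \<delta>)) * v y"
      using lo up D by (intro v_le_mult_v[OF _ _ _ \<delta>_pos kern_iter_ge x y] power_mono) auto
    hence "Im (m x) \<le> R * Im (m y)" by (simp add: R_def v_def power_one_over)
    also have "\<dots> \<le> c * Im (m y)"
      using Im_m_pos[OF y] by (intro mult_right_mono) (auto simp: c_def)
    finally have "Im (m x) \<le> c * Im (m y)" .
    moreover have "1 / c \<le> 1 / D" using D by (intro divide_left_mono) (auto simp: c_def)
    ultimately show ?thesis using lo[OF x] up[OF x] by (auto simp: c_def)
  qed
  moreover have "0 < c" by (simp add: c_def)
  ultimately show ?thesis by blast
qed

end

lemma (in qve_kernel) qve_regular_exists: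
  assumes A: "\<exists>r :: 'a \<Rightarrow> 'a \<Rightarrow> real.
              (\<lambda>(x, y). r x y) \<in> borel_measurable (M \<Otimes>\<^sub>M M)
            \<and> bounded ((\<lambda>(x, y). r x y) ` (space M \<times> space M))
            \<and> (\<forall>x\<in>space M. \<forall>y\<in>space M. 0 \<le> r x y \<and> r x y = r y x)
            \<and> (\<forall>x\<in>space M. \<forall>y\<in>space M. (LINT u|M. r x u * r u y) \<le> s x y)
            \<and> (INF x\<in>space M. (LINT y|M. r x y)) > 0"
    and B: "\<exists>K::nat. 1 \<le> K \<and> (INF p\<in>space M \<times> space M. kern_pow M s K (fst p) (snd p)) > 0"
    and C: "filterlim (\<lambda>\<epsilon>::real. INF x\<in>space M. (LINT y|M.
                1 / (\<epsilon> + (a x - a y)\<^sup>2 + (LINT u|M. (s x u - s y u)\<^sup>2))))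
              at_top (at_right 0)"
  shows "\<exists>r Br \<rho> n \<delta>. qve_regular M s a Bs Ba r Br \<rho> n \<delta>"
proof -
  obtain r where r_meas: "(\<lambda>(x, y). r x y) \<in> borel_measurable (M \<Otimes>\<^sub>M M)"
    and r_bdd: "bounded ((\<lambda>(x, y). r x y) ` (space M \<times> space M))"
    and r: "\<forall>x\<in>space M. \<forall>y\<in>space M. 0 \<le> r x y \<and> r x y = r y x"
    and r_s: "\<forall>x\<in>space M. \<forall>y\<in>space M. (LINT u|M. r x u * r u y) \<le> s x y"
    and r_INF: "(INF x\<in>space M. (LINT y|M. r x y)) > 0"
    using A by blast
  obtain Br where Br: "\<And>x y. x \<in> space M \<Longrightarrow> y \<in> space M \<Longrightarrow> \<bar>r x y\<bar> \<le> Br"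
    using r_bdd unfolding bounded_real by fastforce
  obtain \<rho> where \<rho>: "0 < \<rho>" "\<forall>x\<in>space M. \<rho> \<le> (LINT y|M. r x y)"
    using INF_pos_imp_uniform_lower_bound[OF r_INF] r by (auto intro!: integral_nonneg_AE)
  obtain K where K: "1 \<le> K" and K_INF: "(INF p\<in>space M \<times> space M. kern_pow M s K (fst p) (snd p)) > 0"
    using B by blast
  obtain \<delta> where \<delta>: "0 < \<delta>" "\<forall>p\<in>space M \<times> space M. \<delta> \<le> kern_iter M s (K - 1) (fst p) (snd p)"
    using INF_pos_imp_uniform_lower_bound[OF K_INF] kern_iter_bounds by (auto simp: kern_pow_def)
  have "\<exists>\<epsilon>0>0. \<forall>\<epsilon>\<in>{0<..<\<epsilon>0}. \<forall>x\<in>space M.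
      T \<le> (\<integral>y. 1 / (\<epsilon> + (a x - a y)\<^sup>2 + (\<integral>u. (s x u - s y u)\<^sup>2 \<partial>M)) \<partial>M)" for T
    by (rule filterlim_INF_at_top_imp_uniform_lower_bound[OF C])
      (auto intro!: integral_nonneg_AE AE_I2 divide_nonneg_nonneg add_nonneg_nonneg)
  hence "qve_regular M s a Bs Ba r Br \<rho> (K - 1) \<delta>"
    using r_meas r r_s \<rho> \<delta> Br by unfold_locales (auto simp: abs_le_iff)
  thus ?thesis by blast
qed

theorem mainTheorem4:
  fixes M :: "'a measure" and a :: "'a \<Rightarrow> real" and s :: "'a \<Rightarrow> 'a \<Rightarrow> real"
    and m :: "complex \<Rightarrow> 'a \<Rightarrow> complex"
  assumes prob: "prob_space M"
    and a_meas: "a \<in> borel_measurable M" and a_bdd: "bounded (a ` space M)"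
    and s_meas: "(\<lambda>(x, y). s x y) \<in> borel_measurable (M \<Otimes>\<^sub>M M)"
    and s_bdd: "bounded ((\<lambda>(x, y). s x y) ` (space M \<times> space M))"
    and s_nonneg: "\<And>x y. x \<in> space M \<Longrightarrow> y \<in> space M \<Longrightarrow> 0 \<le> s x y"
    and s_sym: "\<And>x y. x \<in> space M \<Longrightarrow> y \<in> space M \<Longrightarrow> s x y = s y x"
    and m_bmeas: "\<And>z. 0 < Im z \<Longrightarrow> m z \<in> bmeas M"
    and m_H: "\<And>z x. 0 < Im z \<Longrightarrow> x \<in> space M \<Longrightarrow> 0 < Im (m z x)"
    and m_eq: "\<And>z x. 0 < Im z \<Longrightarrow> x \<in> space M \<Longrightarrow>
                 - 1 / m z x = z + complex_of_real (a x) + Sop M s (m z) x"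
    and A: "\<exists>r :: 'a \<Rightarrow> 'a \<Rightarrow> real.
              (\<lambda>(x, y). r x y) \<in> borel_measurable (M \<Otimes>\<^sub>M M)
            \<and> bounded ((\<lambda>(x, y). r x y) ` (space M \<times> space M))
            \<and> (\<forall>x\<in>space M. \<forall>y\<in>space M. 0 \<le> r x y \<and> r x y = r y x)
            \<and> (\<forall>x\<in>space M. \<forall>y\<in>space M. (LINT u|M. r x u * r u y) \<le> s x y)
            \<and> (INF x\<in>space M. (LINT y|M. r x y)) > 0"
    and B: "\<exists>K::nat. 1 \<le> K \<and> (INF p\<in>space M \<times> space M. kern_pow M s K (fst p) (snd p)) > 0"
    and C: "filterlim (\<lambda>\<epsilon>::real. INF x\<in>space M. (LINT y|M.
                1 / (\<epsilon> + (a x - a y)\<^sup>2 + (LINT u|M. (s x u - s y u)\<^sup>2))))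
              at_top (at_right 0)"
  shows "\<exists>c>0. \<forall>z x y. 0 < Im z \<and> cmod z \<le> 2 * kappa M a s
           \<and> x \<in> space M \<and> y \<in> space M \<longrightarrow>
             1 / c \<le> cmod (m z x) \<and> cmod (m z x) \<le> c
             \<and> Im (m z x) \<le> c * Im (m z y) \<and> Im (m z y) \<le> c * Im (m z x)"
proof -
  interpret prob_space M by (rule prob)
  obtain Bs Ba where "\<And>x y. x \<in> space M \<Longrightarrow> y \<in> space M \<Longrightarrow> \<bar>s x y\<bar> \<le> Bs"
    and "\<And>x. x \<in> space M \<Longrightarrow> \<bar>a x\<bar> \<le> Ba"
    using s_bdd a_bdd unfolding bounded_real by fastforce
  then interpret qve_kernel M s a Bs Ba
    using s_meas s_nonneg a_meas by unfold_locales (auto simp: abs_le_iff)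
  obtain r Br \<rho> n \<delta> where regular: "qve_regular M s a Bs Ba r Br \<rho> n \<delta>"
    using qve_regular_exists[OF A B C] by blast
  obtain c where "0 < c" and c: "\<And>z m x y. qve_solution M s a Bs Ba z m \<Longrightarrow>
      cmod z \<le> 2 * kappa M a s \<Longrightarrow> x \<in> space M \<Longrightarrow> y \<in> space M \<Longrightarrow>
      1 / c \<le> cmod (m x) \<and> cmod (m x) \<le> c \<and> Im (m x) \<le> c * Im (m y)"
    using qve_regular.uniform_solution_bounds[OF regular, where Z="2 * kappa M a s"] by blast
  have "qve_solution M s a Bs Ba z (m z)" if "0 < Im z" for z
    using that m_bmeas m_H m_eq by unfold_locales auto
  thus ?thesis using \<open>0 < c\<close> c by blast
qed

end
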